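(* Let $k,\ell\ge1$, let $R=[0,\ell]\times[0,k]$, and let $\mathcal P_{k,\ell}$ be the set of self-avoiding walks on $\mathbb Z^2$ with North, East and South unit steps, starting at $(0,0)$, staying in $R$ and ending at $(\ell,k)$. Let $p$ be the probability distribution on $\mathcal P_{k,\ell}$ produced by the sampling procedure: starting from $(0,0)$, at each time choose uniformly at random one of the eligible steps (a step N, E or S is eligible if appending it gives a self-avoiding N/E/S walk in $R$ that can still be extended into an element of $\mathcal P_{k,\ell}$), until $(\ell,k)$ is reached. Let $X_{k,\ell}=1/p(w)$ where $w$ is drawn according to $p$, so that $\mathbb E(X_{k,\ell}^2)=\sum_{w\in\mathcal P_{k,\ell}}1/p(w)$. Then for every fixed $k\ge1$, $$M_k(x):=\sum_{\ell\ge1}\mathbb E(X_{k,\ell}^2)\,x^\ell=2x\frac{N_k}{G_k},$$ where $N_k,G_k$ are polynomials in $x$ defined by $N_1=2$, $N_2=5+3x$, $N_3=11+9x$, $N_4=23+54x+27x^2$, $G_1=1-4x$, $G_2=1-9x-6x^2$, $G_3=1-19x-18x^2$, $G_4=1-36x-99x^2-54x^3$, and for $k\ge5$, $N_k=(5+9x)N_{k-2}-4N_{k-4}$, $G_k=(5+9x)G_{k-2}-4G_{k-4}$. In particular $M_k(x)$ is a rational series. *)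

theory Defs
  imports Complex_Main "HOL-Computational_Algebra.Polynomial_FPS"
begin

datatype step = N | E | S

fun delta :: "step \<Rightarrow> int \<times> int" where
  "delta N = (0, 1)"
| "delta E = (1, 0)"
| "delta S = (0, -1)"

definition move :: "int \<times> int \<Rightarrow> step \<Rightarrow> int \<times> int" where
  "move q s = (fst q + fst (delta s), snd q + snd (delta s))"

fun path_pts :: "int \<times> int \<Rightarrow> step list \<Rightarrow> (int \<times> int) list" where
  "path_pts q [] = [q]"
| "path_pts q (s # ss) = q # path_pts (move q s) ss"

definition valid_walk :: "nat \<Rightarrow> nat \<Rightarrow> step list \<Rightarrow> bool" where
  "valid_walk k l w \<longleftrightarrow> distinct (path_pts (0,0) w) \<and>
     (\<forall>q\<in>set (path_pts (0,0) w). 0 \<le> fst q \<and> fst q \<le> int l \<and> 0 \<le> snd q \<and> snd q \<le> int k)"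

definition Pwalks :: "nat \<Rightarrow> nat \<Rightarrow> step list set" where
  "Pwalks k l = {w. valid_walk k l w \<and> last (path_pts (0,0) w) = (int l, int k)}"

definition eligible :: "nat \<Rightarrow> nat \<Rightarrow> step list \<Rightarrow> step set" where
  "eligible k l w = {s. valid_walk k l (w @ [s]) \<and> (\<exists>v. w @ [s] @ v \<in> Pwalks k l)}"

definition prob_walk :: "nat \<Rightarrow> nat \<Rightarrow> step list \<Rightarrow> real" where
  "prob_walk k l w = (\<Prod>i<length w. 1 / real (card (eligible k l (take i w))))"

definition EX2 :: "nat \<Rightarrow> nat \<Rightarrow> real" where
  "EX2 k l = (\<Sum>w\<in>Pwalks k l. prob_walk k l w * (1 / prob_walk k l w)^2)"

fun Npoly :: "nat \<Rightarrow> real poly" where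
  "Npoly 0 = 0"
| "Npoly (Suc 0) = [:2:]"
| "Npoly (Suc (Suc 0)) = [:5, 3:]"
| "Npoly (Suc (Suc (Suc 0))) = [:11, 9:]"
| "Npoly (Suc (Suc (Suc (Suc 0)))) = [:23, 54, 27:]"
| "Npoly (Suc (Suc (Suc (Suc (Suc n))))) =
     [:5, 9:] * Npoly (Suc (Suc (Suc n))) - smult 4 (Npoly (Suc n))"

fun Gpoly :: "nat \<Rightarrow> real poly" where
  "Gpoly 0 = 0"
| "Gpoly (Suc 0) = [:1, -4:]"
| "Gpoly (Suc (Suc 0)) = [:1, -9, -6:]"
| "Gpoly (Suc (Suc (Suc 0))) = [:1, -19, -18:]"
| "Gpoly (Suc (Suc (Suc (Suc 0)))) = [:1, -36, -99, -54:]"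
| "Gpoly (Suc (Suc (Suc (Suc (Suc n))))) =
     [:5, 9:] * Gpoly (Suc (Suc (Suc n))) - smult 4 (Gpoly (Suc n))"

end

(*
  The weight 1/p(w) is the product of the numbers of eligible steps along w, and these
  numbers depend only on the current point and the previous step: an N/E/S walk never
  returns to a column it has left, it occupies a vertical segment of its current column,
  and in the last column it can no longer go down. Hence E(X_{k,l}^2) is computed by a
  transfer recursion from column to column. For the generating function V_a of the weight
  of walks entering a column at height a, the vertical runs inside a column contribute
  a kernel 2^|a-h|, which turns the linear system for the V_a into a three-term recurrence
  in a with coefficient 5 + 9x. Solving it upwards from the bottom row and using the
  symmetry a <-> k - a of the column closes the system and gives (V_0 - 1) G_k = 2x N_k.
*)
theory Submission
  imports Defs
begin

unbundle fps_syntax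

lemma UNIV_step: "(UNIV :: step set) = {N, E, S}"
  using step.exhaust by auto

lemma finite_step_set [simp]: "finite (A :: step set)"
  using finite_subset[OF subset_UNIV, of A] by (simp add: UNIV_step)

lemma sum_step_set:
  "sum f (A :: step set) =
     (if E \<in> A then f E else 0) + (if N \<in> A then f N else 0) + (if S \<in> A then f S else 0)"
proof -
  have "sum f A = (\<Sum>s\<in>UNIV. if s \<in> A then f s else 0)"
    by (simp add: sum.If_cases Int_absorb1)
  then show ?thesis
    by (simp add: UNIV_step add.commute add.left_commute)
qed

lemma card_step_set:
  "real (card (A :: step set)) =
     (if E \<in> A then 1 else 0) + (if N \<in> A then 1 else 0) + (if S \<in> A then 1 else 0)"
  using sum_step_set[of "\<lambda>_. 1 :: real" A] by simp

lemma move_simps [simp]: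
  "move q N = (fst q, snd q + 1)" "move q E = (fst q + 1, snd q)" "move q S = (fst q, snd q - 1)"
  by (auto simp: move_def)

lemma path_pts_not_Nil [simp]: "path_pts q w \<noteq> []"
  by (cases w) auto

lemma length_path_pts [simp]: "length (path_pts q w) = Suc (length w)"
  by (induction w arbitrary: q) auto

lemma path_pts_snoc: "path_pts q (w @ [s]) = path_pts q w @ [move (last (path_pts q w)) s]"
  by (induction w arbitrary: q) auto

lemma set_path_pts_prefix: "set (path_pts q w) \<subseteq> set (path_pts q (w @ v))"
  by (induction v rule: rev_induct) (auto simp: path_pts_snoc simp flip: append_assoc)

abbreviation endpoint :: "step list \<Rightarrow> int \<times> int" where
  "endpoint w \<equiv> last (path_pts (0, 0) w)"

lemma endpoint_snoc [simp]: "endpoint (w @ [s]) = move (endpoint w) s"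
  by (simp add: path_pts_snoc)

definition in_rect :: "nat \<Rightarrow> nat \<Rightarrow> int \<times> int \<Rightarrow> bool" where
  "in_rect k l q \<longleftrightarrow> 0 \<le> fst q \<and> fst q \<le> int l \<and> 0 \<le> snd q \<and> snd q \<le> int k"

text \<open>The empty walk counts as having arrived by an E step: in both cases nothing of the walk
  lies in the current column except its endpoint.\<close>
definition last_step :: "step list \<Rightarrow> step" where
  "last_step w = (if w = [] then E else last w)"

lemma last_step_snoc [simp]: "last_step (w @ [s]) = s"
  by (simp add: last_step_def)

lemma valid_walk_iff_in_rect:
  "valid_walk k l w \<longleftrightarrow> distinct (path_pts (0, 0) w) \<and> (\<forall>q\<in>set (path_pts (0, 0) w). in_rect k l q)"
  unfolding valid_walk_def in_rect_def by auto

lemma valid_walk_Nil [simp]: "valid_walk k l []"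
  by (simp add: valid_walk_def)

lemma valid_walk_snoc:
  "valid_walk k l (w @ [s]) \<longleftrightarrow>
     valid_walk k l w \<and> move (endpoint w) s \<notin> set (path_pts (0, 0) w) \<and> in_rect k l (move (endpoint w) s)"
  unfolding valid_walk_iff_in_rect path_pts_snoc by auto

lemma valid_walk_appendD: "valid_walk k l (w @ v) \<Longrightarrow> valid_walk k l w"
  by (induction v rule: rev_induct) (auto simp: valid_walk_snoc simp flip: append_assoc)

lemma in_rect_endpoint: "valid_walk k l w \<Longrightarrow> in_rect k l (endpoint w)"
  by (simp add: valid_walk_iff_in_rect)

lemma last_step_S_visited_above:
  assumes "last_step w = S"
  shows "move (endpoint w) N \<in> set (path_pts (0, 0) w)"
proof -
  from assms have "w \<noteq> []" by (auto simp: last_step_def)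
  with assms obtain w' where w: "w = w' @ [S]"
    by (metis append_butlast_last_id last_step_def)
  have "endpoint w' \<in> set (path_pts (0, 0) w)"
    using set_path_pts_prefix[of "(0, 0)" w' "[S]"] w by auto
  then show ?thesis using w by simp
qed

lemma last_step_N_visited_below:
  assumes "last_step w = N"
  shows "move (endpoint w) S \<in> set (path_pts (0, 0) w)"
proof -
  from assms have "w \<noteq> []" by (auto simp: last_step_def)
  with assms obtain w' where w: "w = w' @ [N]"
    by (metis append_butlast_last_id last_step_def)
  have "endpoint w' \<in> set (path_pts (0, 0) w)"
    using set_path_pts_prefix[of "(0, 0)" w' "[N]"] w by auto
  then show ?thesis using w by simp
qed

lemma visited_behind_endpoint:
  assumes "valid_walk k l w" "q \<in> set (path_pts (0, 0) w)"
  shows "fst q \<le> fst (endpoint w) \<and>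
    (fst q = fst (endpoint w) \<longrightarrow>
       (last_step w \<noteq> S \<longrightarrow> snd q \<le> snd (endpoint w)) \<and> (last_step w \<noteq> N \<longrightarrow> snd (endpoint w) \<le> snd q))"
  using assms
proof (induction w arbitrary: q rule: rev_induct)
  case Nil
  then show ?case by (simp add: last_step_def)
next
  case (snoc s w)
  have valid: "valid_walk k l w" and fresh: "move (endpoint w) s \<notin> set (path_pts (0, 0) w)"
    using snoc.prems(1) by (auto simp: valid_walk_snoc)
  from snoc.prems(2) consider "q \<in> set (path_pts (0, 0) w)" | "q = move (endpoint w) s"
    by (auto simp: path_pts_snoc)
  then show ?case
  proof cases
    case 1
    note IH = snoc.IH[OF valid 1]
    show ?thesis
    proof (cases s)
      case N
      then have "last_step w \<noteq> S" using last_step_S_visited_above fresh by auto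
      then show ?thesis using IH N by auto
    next
      case S
      then have "last_step w \<noteq> N" using last_step_N_visited_below fresh by auto
      then show ?thesis using IH S by auto
    next
      case E
      then show ?thesis using IH by simp
    qed
  qed simp
qed

lemma move_E_not_visited:
  "valid_walk k l w \<Longrightarrow> move (endpoint w) E \<notin> set (path_pts (0, 0) w)"
  using visited_behind_endpoint[of k l w "move (endpoint w) E"] by auto

lemma move_N_not_visited:
  "valid_walk k l w \<Longrightarrow> last_step w \<noteq> S \<Longrightarrow> move (endpoint w) N \<notin> set (path_pts (0, 0) w)"
  using visited_behind_endpoint[of k l w "move (endpoint w) N"] by auto

lemma move_S_not_visited:
  "valid_walk k l w \<Longrightarrow> last_step w \<noteq> N \<Longrightarrow> move (endpoint w) S \<notin> set (path_pts (0, 0) w)"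
  using visited_behind_endpoint[of k l w "move (endpoint w) S"] by auto

lemma below_top_if_last_step_S:
  "valid_walk k l w \<Longrightarrow> last_step w = S \<Longrightarrow> snd (endpoint w) < int k"
  using last_step_S_visited_above[of w] by (force simp: valid_walk_iff_in_rect in_rect_def)

lemma extendable_in_last_column:
  "valid_walk k l w \<Longrightarrow> fst (endpoint w) = int l \<Longrightarrow> last_step w \<noteq> S \<Longrightarrow> \<exists>v. w @ v \<in> Pwalks k l"
proof (induction "nat (int k - snd (endpoint w))" arbitrary: w rule: less_induct)
  case less
  have rect: "in_rect k l (endpoint w)" using in_rect_endpoint[OF less.prems(1)] .
  show ?case
  proof (cases "snd (endpoint w) = int k")
    case True
    then have "w @ [] \<in> Pwalks k l" using less.prems by (simp add: Pwalks_def prod_eq_iff)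
    then show ?thesis by blast
  next
    case False
    then have below: "snd (endpoint w) < int k" using rect by (simp add: in_rect_def)
    have valid: "valid_walk k l (w @ [N])"
      using less.prems(1) move_N_not_visited[OF less.prems(1,3)] below rect
      by (auto simp: valid_walk_snoc in_rect_def)
    have "\<exists>v. (w @ [N]) @ v \<in> Pwalks k l"
      by (rule less.hyps) (use below valid less.prems in auto)
    then show ?thesis by auto
  qed
qed

lemma extendable_before_last_column:
  "valid_walk k l w \<Longrightarrow> fst (endpoint w) < int l \<Longrightarrow> \<exists>v. w @ v \<in> Pwalks k l"
proof (induction "nat (int l - fst (endpoint w))" arbitrary: w rule: less_induct)
  case less
  have valid: "valid_walk k l (w @ [E])"
    using less.prems move_E_not_visited in_rect_endpoint[OF less.prems(1)]
    by (auto simp: valid_walk_snoc in_rect_def)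
  have "\<exists>v. (w @ [E]) @ v \<in> Pwalks k l"
  proof (cases "fst (endpoint w) + 1 = int l")
    case True
    then show ?thesis by (intro extendable_in_last_column[OF valid]) auto
  next
    case False
    then show ?thesis by (intro less.hyps) (use valid less.prems in auto)
  qed
  then show ?case by auto
qed

lemma extendable_if:
  "valid_walk k l w \<Longrightarrow> fst (endpoint w) < int l \<or> last_step w \<noteq> S \<Longrightarrow> \<exists>v. w @ v \<in> Pwalks k l"
  using extendable_before_last_column extendable_in_last_column in_rect_endpoint[of k l w]
  by (force simp: in_rect_def)

lemma not_extendable_down_last_column:
  "valid_walk k l w \<Longrightarrow> fst (endpoint w) = int l \<Longrightarrow> last_step w = S \<Longrightarrow> w @ v \<notin> Pwalks k l"
proof (induction v arbitrary: w)
  case Nil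
  then show ?case
    using below_top_if_last_step_S by (fastforce simp: Pwalks_def)
next
  case (Cons s v)
  show ?case
  proof
    assume P: "w @ s # v \<in> Pwalks k l"
    then have valid: "valid_walk k l (w @ [s])"
      using valid_walk_appendD[of k l "w @ [s]" v] by (simp add: Pwalks_def)
    show False
    proof (cases s)
      case N
      then show ?thesis using valid last_step_S_visited_above[OF Cons.prems(3)] valid_walk_snoc by auto
    next
      case E
      then show ?thesis using valid Cons.prems by (auto simp: valid_walk_snoc in_rect_def)
    next
      case S
      have "(w @ [S]) @ v \<notin> Pwalks k l"
        by (rule Cons.IH) (use valid S Cons.prems in auto)
      then show ?thesis using P S by simp
    qed
  qed
qed

lemma eligible_iff:
  "s \<in> eligible k l w \<longleftrightarrow> valid_walk k l (w @ [s]) \<and> (\<exists>v. (w @ [s]) @ v \<in> Pwalks k l)"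
  by (simp add: eligible_def)

lemma eligibleI:
  assumes "valid_walk k l w" "move (endpoint w) s \<notin> set (path_pts (0, 0) w)"
    "in_rect k l (move (endpoint w) s)" "fst (endpoint w) < int l \<or> s \<noteq> S"
  shows "s \<in> eligible k l w"
proof -
  have valid: "valid_walk k l (w @ [s])" using assms(1-3) by (simp add: valid_walk_snoc)
  have "fst (endpoint (w @ [s])) < int l \<or> last_step (w @ [s]) \<noteq> S"
    using assms(4) by (cases s) auto
  then show ?thesis unfolding eligible_iff using valid extendable_if by blast
qed

lemma E_eligible_iff:
  assumes "valid_walk k l w"
  shows "E \<in> eligible k l w \<longleftrightarrow> fst (endpoint w) < int l"
proof
  assume "E \<in> eligible k l w"
  then show "fst (endpoint w) < int l" by (auto simp: eligible_iff valid_walk_snoc in_rect_def)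
next
  assume "fst (endpoint w) < int l"
  then show "E \<in> eligible k l w"
    using assms move_E_not_visited in_rect_endpoint[OF assms]
    by (intro eligibleI) (auto simp: in_rect_def)
qed

lemma N_eligible_iff:
  assumes "valid_walk k l w"
  shows "N \<in> eligible k l w \<longleftrightarrow> snd (endpoint w) < int k \<and> last_step w \<noteq> S"
proof
  assume "N \<in> eligible k l w"
  then show "snd (endpoint w) < int k \<and> last_step w \<noteq> S"
    using last_step_S_visited_above[of w] by (auto simp: eligible_iff valid_walk_snoc in_rect_def)
next
  assume "snd (endpoint w) < int k \<and> last_step w \<noteq> S"
  then show "N \<in> eligible k l w"
    using assms move_N_not_visited in_rect_endpoint[OF assms]
    by (intro eligibleI) (auto simp: in_rect_def)
qed

lemma S_eligible_iff:
  assumes "valid_walk k l w"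
  shows "S \<in> eligible k l w \<longleftrightarrow> 0 < snd (endpoint w) \<and> last_step w \<noteq> N \<and> fst (endpoint w) < int l"
proof
  assume S: "S \<in> eligible k l w"
  then have valid: "valid_walk k l (w @ [S])" by (simp add: eligible_iff)
  then have "0 < snd (endpoint w) \<and> last_step w \<noteq> N"
    using last_step_N_visited_below[of w] by (auto simp: valid_walk_snoc in_rect_def)
  moreover have "fst (endpoint w) \<noteq> int l"
    using S not_extendable_down_last_column[OF valid] by (auto simp: eligible_iff)
  moreover have "fst (endpoint w) \<le> int l"
    using in_rect_endpoint[OF assms] by (simp add: in_rect_def)
  ultimately show "0 < snd (endpoint w) \<and> last_step w \<noteq> N \<and> fst (endpoint w) < int l"
    by simp
next
  assume "0 < snd (endpoint w) \<and> last_step w \<noteq> N \<and> fst (endpoint w) < int l"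
  then show "S \<in> eligible k l w"
    using assms move_S_not_visited in_rect_endpoint[OF assms]
    by (intro eligibleI) (auto simp: in_rect_def)
qed

lemma valid_walk_length_less:
  assumes "valid_walk k l w"
  shows "length w < (l + 1) * (k + 1)"
proof -
  have sub: "set (path_pts (0, 0) w) \<subseteq> {0..int l} \<times> {0..int k}"
    using assms by (auto simp: valid_walk_def)
  have "Suc (length w) = card (set (path_pts (0, 0) w))"
    using assms by (simp add: valid_walk_def distinct_card)
  also have "\<dots> \<le> card ({0..int l} \<times> {0..int k})"
    by (rule card_mono[OF _ sub]) simp
  also have "\<dots> = (l + 1) * (k + 1)"
    by (simp add: card_cartesian_product nat_add_distrib)
  finally show ?thesis by simp
qed

definition completions :: "nat \<Rightarrow> nat \<Rightarrow> step list \<Rightarrow> step list set" where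
  "completions k l w = {v. w @ v \<in> Pwalks k l}"

text \<open>The second moment restricted to the walks through the prefix w, rescaled by the
  probability of w: the sum, over all completions, of the inverse conditional probabilities.\<close>
definition completion_weight :: "nat \<Rightarrow> nat \<Rightarrow> step list \<Rightarrow> real" where
  "completion_weight k l w =
     (\<Sum>v\<in>completions k l w. \<Prod>i<length v. real (card (eligible k l (w @ take i v))))"

lemma finite_completions: "finite (completions k l w)"
proof (rule finite_subset)
  show "completions k l w \<subseteq> {v. set v \<subseteq> UNIV \<and> length v \<le> (l + 1) * (k + 1)}"
    using valid_walk_length_less by (fastforce simp: completions_def Pwalks_def)
qed (rule finite_lists_length_le, simp)

lemma completions_Pwalk:
  assumes "w \<in> Pwalks k l"
  shows "completions k l w = {[]}"
proof -
  have "v = []" if P: "w @ v \<in> Pwalks k l" for v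
  proof (rule ccontr)
    assume "v \<noteq> []"
    then obtain v' s where v: "v = v' @ [s]" by (metis rev_exhaust)
    have "move (endpoint (w @ v')) s = endpoint w"
      using P assms v by (simp add: Pwalks_def flip: append_assoc)
    also have "\<dots> \<in> set (path_pts (0, 0) (w @ v'))"
      using set_path_pts_prefix[of "(0, 0)" w v'] by auto
    finally show False
      using P v by (simp add: Pwalks_def valid_walk_snoc flip: append_assoc)
  qed
  then show ?thesis using assms by (auto simp: completions_def)
qed

lemma completions_not_Pwalk:
  assumes "w \<notin> Pwalks k l"
  shows "completions k l w = (\<Union>s\<in>eligible k l w. (Cons s) ` completions k l (w @ [s]))"
proof
  show "completions k l w \<subseteq> (\<Union>s\<in>eligible k l w. (Cons s) ` completions k l (w @ [s]))"
  proof
    fix v assume "v \<in> completions k l w"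
    then have P: "w @ v \<in> Pwalks k l" by (simp add: completions_def)
    with assms obtain s v' where v: "v = s # v'" by (cases v) auto
    have "valid_walk k l (w @ [s])"
      using P v valid_walk_appendD[of k l "w @ [s]" v'] by (simp add: Pwalks_def)
    then have "s \<in> eligible k l w" using P v by (auto simp: eligible_def)
    moreover have "v' \<in> completions k l (w @ [s])" using P v by (simp add: completions_def)
    ultimately show "v \<in> (\<Union>s\<in>eligible k l w. (Cons s) ` completions k l (w @ [s]))"
      using v by blast
  qed
qed (auto simp: completions_def)

lemma completion_weight_rec:
  "completion_weight k l w = (if w \<in> Pwalks k l then 1 else
     real (card (eligible k l w)) * (\<Sum>s\<in>eligible k l w. completion_weight k l (w @ [s])))"
proof (cases "w \<in> Pwalks k l")
  case True
  then show ?thesis by (simp add: completion_weight_def completions_Pwalk)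
next
  case False
  let ?c = "real (card (eligible k l w))"
  have "completion_weight k l w = (\<Sum>s\<in>eligible k l w. \<Sum>v\<in>(Cons s) ` completions k l (w @ [s]).
          \<Prod>i<length v. real (card (eligible k l (w @ take i v))))"
    unfolding completion_weight_def completions_not_Pwalk[OF False]
    by (rule sum.UNION_disjoint) (auto simp: finite_completions)
  also have "\<dots> = (\<Sum>s\<in>eligible k l w. ?c * completion_weight k l (w @ [s]))"
  proof -
    have "(\<Prod>i<length (s # v). real (card (eligible k l (w @ take i (s # v))))) =
          ?c * (\<Prod>i<length v. real (card (eligible k l ((w @ [s]) @ take i v))))" for s v
      by (simp only: length_Cons prod.lessThan_Suc_shift) simp
    then show ?thesis
      by (simp add: sum.reindex completion_weight_def sum_distrib_left)
  qed
  finally show ?thesis using False by (simp add: sum_distrib_left)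
qed

lemma EX2_eq_completion_weight: "EX2 k l = completion_weight k l []"
proof -
  have "prob_walk k l w * (1 / prob_walk k l w)^2 = (\<Prod>i<length w. real (card (eligible k l (take i w))))"
    if w: "w \<in> Pwalks k l" for w
  proof -
    have "eligible k l (take i w) \<noteq> {}" if i: "i < length w" for i
    proof -
      have "w = (take i w @ [w ! i]) @ drop (Suc i) w"
        using i by (simp add: Cons_nth_drop_Suc)
      then have "w ! i \<in> eligible k l (take i w)"
        using w valid_walk_appendD[of k l "take i w @ [w ! i]" "drop (Suc i) w"]
        unfolding eligible_iff Pwalks_def by (metis (mono_tags, lifting) mem_Collect_eq)
      then show ?thesis by blast
    qed
    then have "prob_walk k l w \<noteq> 0" by (simp add: prob_walk_def)
    then show ?thesis
      by (simp add: power2_eq_square prob_walk_def prod_dividef)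
  qed
  then show ?thesis by (simp add: EX2_def completion_weight_def completions_def)
qed

lemma power_diff_eq_mult_power_diff_Suc:
  fixes x :: "'a :: monoid_mult"
  assumes "m < n"
  shows "x ^ (n - m) = x * x ^ (n - Suc m)"
proof -
  have "n - m = Suc (n - Suc m)" using assms by simp
  then show ?thesis by simp
qed

text \<open>entry_weight k n a is the completion weight of a walk that has just entered a column
  by an E step at height a, with n columns to its right; climb_weight and descent_weight are
  the analogues after an N resp. S step (see state_weight). A vertical run from height a to h
  meets entry_degree k a eligible steps at a and, after that, two at every height except one
  at h = k resp. h = 0; their product is transit_weight k a h.\<close>
definition entry_degree :: "nat \<Rightarrow> nat \<Rightarrow> real" where
  "entry_degree k a = 1 + (if a < k then 1 else 0) + (if 0 < a then 1 else 0)"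

definition transit_weight :: "nat \<Rightarrow> nat \<Rightarrow> nat \<Rightarrow> real" where
  "transit_weight k a h =
     (if h = a then 1
      else if a < h then 2 ^ (h - a - 1) * (if h < k then 2 else 1)
      else 2 ^ (a - h - 1) * (if 0 < h then 2 else 1))"

fun entry_weight :: "nat \<Rightarrow> nat \<Rightarrow> nat \<Rightarrow> real" where
  "entry_weight k 0 a = 1"
| "entry_weight k (Suc n) a = entry_degree k a * (\<Sum>h\<le>k. transit_weight k a h * entry_weight k n h)"

definition climb_weight :: "nat \<Rightarrow> nat \<Rightarrow> nat \<Rightarrow> real" where
  "climb_weight k n y = (\<Sum>h\<in>{y..k}. 2 ^ (h - y) * (if h < k then 2 else 1) * entry_weight k n h)"

definition descent_weight :: "nat \<Rightarrow> nat \<Rightarrow> nat \<Rightarrow> real" where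
  "descent_weight k n y = (\<Sum>h\<in>{..y}. 2 ^ (y - h) * (if 0 < h then 2 else 1) * entry_weight k n h)"

definition state_weight :: "nat \<Rightarrow> nat \<Rightarrow> nat \<Rightarrow> nat \<Rightarrow> step \<Rightarrow> real" where
  "state_weight k l i y d =
     (if l \<le> i then (if d = S then 0 else 1)
      else (case d of
              E \<Rightarrow> entry_weight k (l - i) y
            | N \<Rightarrow> climb_weight k (l - i - 1) y
            | S \<Rightarrow> descent_weight k (l - i - 1) y))"

lemma climb_weight_rec:
  assumes "y \<le> k"
  shows "climb_weight k n y =
    (if y < k then 2 else 1) * (entry_weight k n y + (if y < k then climb_weight k n (y + 1) else 0))"
proof (cases "y < k")
  case True
  have "{y..k} = insert y {y + 1..k}" using True by auto
  then have "climb_weight k n y =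
      2 * entry_weight k n y + (\<Sum>h\<in>{y + 1..k}. 2 ^ (h - y) * (if h < k then 2 else 1) * entry_weight k n h)"
    using True by (simp add: climb_weight_def)
  also have "(\<Sum>h\<in>{y + 1..k}. 2 ^ (h - y) * (if h < k then 2 else 1) * entry_weight k n h) =
      2 * climb_weight k n (y + 1)"
    unfolding climb_weight_def sum_distrib_left
    by (rule sum.cong) (auto simp: power_diff_eq_mult_power_diff_Suc)
  finally show ?thesis using True by (simp add: algebra_simps)
next
  case False
  with assms show ?thesis by (simp add: climb_weight_def)
qed

lemma descent_weight_rec:
  "descent_weight k n y =
    (if 0 < y then 2 else 1) * (entry_weight k n y + (if 0 < y then descent_weight k n (y - 1) else 0))"
proof (cases "0 < y")
  case True
  have "{..y} = insert y {..y - 1}" using True by auto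
  then have "descent_weight k n y =
      2 * entry_weight k n y + (\<Sum>h\<in>{..y - 1}. 2 ^ (y - h) * (if 0 < h then 2 else 1) * entry_weight k n h)"
    using True by (simp add: descent_weight_def)
  also have "(\<Sum>h\<in>{..y - 1}. 2 ^ (y - h) * (if 0 < h then 2 else 1) * entry_weight k n h) =
      2 * descent_weight k n (y - 1)"
    unfolding descent_weight_def sum_distrib_left
    by (rule sum.cong) (use True in \<open>auto simp: power_diff_eq_mult_power_diff_Suc\<close>)
  finally show ?thesis using True by (simp add: algebra_simps)
next
  case False
  then show ?thesis by (simp add: descent_weight_def)
qed

lemma entry_weight_Suc_split:
  assumes "y \<le> k"
  shows "entry_weight k (Suc n) y = entry_degree k y *
    (entry_weight k n y + (if y < k then climb_weight k n (y + 1) else 0)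
       + (if 0 < y then descent_weight k n (y - 1) else 0))"
proof -
  let ?t = "\<lambda>h. transit_weight k y h * entry_weight k n h"
  have "{..k} = {..<y} \<union> insert y {y<..k}" using assms by auto
  then have "(\<Sum>h\<le>k. ?t h) = sum ?t {..<y} + sum ?t (insert y {y<..k})"
    by (simp only:) (rule sum.union_disjoint, auto)
  also have "\<dots> = sum ?t {..<y} + (?t y + sum ?t {y<..k})"
    by simp
  moreover have "sum ?t {y<..k} = (if y < k then climb_weight k n (y + 1) else 0)"
  proof -
    have "{y<..k} = {y + 1..k}" by auto
    then show ?thesis
      unfolding climb_weight_def by (auto simp: transit_weight_def intro!: sum.cong)
  qed
  moreover have "sum ?t {..<y} = (if 0 < y then descent_weight k n (y - 1) else 0)"
  proof -
    have "{..<y} = {..y - 1}" if "0 < y" using that by auto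
    then show ?thesis
      unfolding descent_weight_def by (auto simp: transit_weight_def intro!: sum.cong)
  qed
  ultimately show ?thesis by (simp add: transit_weight_def)
qed

lemma completion_weight_unfold:
  assumes "valid_walk k l w" "endpoint w = (int i, int y)"
  defines "eE \<equiv> i < l" and "eN \<equiv> y < k \<and> last_step w \<noteq> S"
    and "eS \<equiv> 0 < y \<and> last_step w \<noteq> N \<and> i < l"
  shows "completion_weight k l w = (if i = l \<and> y = k then 1 else
      ((if eE then 1 else 0) + (if eN then 1 else 0) + (if eS then 1 else 0)) *
      ((if eE then completion_weight k l (w @ [E]) else 0)
       + (if eN then completion_weight k l (w @ [N]) else 0)
       + (if eS then completion_weight k l (w @ [S]) else 0)))"
proof -
  have "E \<in> eligible k l w \<longleftrightarrow> eE" "N \<in> eligible k l w \<longleftrightarrow> eN" "S \<in> eligible k l w \<longleftrightarrow> eS"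
    using E_eligible_iff[OF assms(1)] N_eligible_iff[OF assms(1)] S_eligible_iff[OF assms(1)] assms(2)
    by (simp_all add: eE_def eN_def eS_def)
  moreover have "w \<in> Pwalks k l \<longleftrightarrow> i = l \<and> y = k"
    using assms(1,2) by (auto simp: Pwalks_def)
  ultimately show ?thesis
    by (subst completion_weight_rec) (simp only: sum_step_set card_step_set)
qed

lemma completion_weight_eq_state_weight:
  "valid_walk k l w \<Longrightarrow> endpoint w = (int i, int y) \<Longrightarrow>
     completion_weight k l w = state_weight k l i y (last_step w)"
proof (induction "(l + 1) * (k + 1) - length w" arbitrary: w i y rule: less_induct)
  case less
  have bounds: "i \<le> l" "y \<le> k"
    using in_rect_endpoint[OF less.prems(1)] less.prems(2) by (auto simp: in_rect_def)
  have IH: "completion_weight k l (w @ [s]) = state_weight k l i' y' s"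
    if "s \<in> eligible k l w" "move (int i, int y) s = (int i', int y')" for s i' y'
  proof -
    have valid: "valid_walk k l (w @ [s])" using that by (simp add: eligible_def)
    show ?thesis
      using less.hyps[of "w @ [s]" i' y'] valid_walk_length_less[OF valid] valid that less.prems
      by simp
  qed
  have ZE: "i < l \<Longrightarrow> completion_weight k l (w @ [E]) = entry_weight k (l - i - 1) y"
    using IH[of E "Suc i" y] E_eligible_iff[OF less.prems(1)] less.prems(2)
    by (simp add: state_weight_def)
  have ZN: "y < k \<Longrightarrow> last_step w \<noteq> S \<Longrightarrow>
      completion_weight k l (w @ [N]) = state_weight k l i (Suc y) N"
    using IH[of N i "Suc y"] N_eligible_iff[OF less.prems(1)] less.prems(2) by simp
  have ZS: "0 < y \<Longrightarrow> last_step w \<noteq> N \<Longrightarrow> i < l \<Longrightarrow>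
      completion_weight k l (w @ [S]) = state_weight k l i (y - 1) S"
    using IH[of S i "y - 1"] S_eligible_iff[OF less.prems(1)] less.prems(2) by simp
  note unfold = completion_weight_unfold[OF less.prems]
  show ?case
  proof (cases "i < l")
    case True
    then have n: "entry_weight k (l - i) y = entry_weight k (Suc (l - i - 1)) y"
      by (simp add: Suc_diff_Suc)
    show ?thesis
    proof (cases "last_step w")
      case E
      then show ?thesis
        unfolding unfold state_weight_def n entry_weight_Suc_split[OF bounds(2)]
        using True ZE ZN ZS by (auto simp: state_weight_def entry_degree_def)
    next
      case N
      then show ?thesis
        unfolding unfold using True ZE ZN climb_weight_rec[OF bounds(2), of "l - i - 1"]
        by (auto simp: state_weight_def)
    next
      case S
      then show ?thesis
        unfolding unfold using True ZE ZS descent_weight_rec[of k "l - i - 1" y]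
        by (auto simp: state_weight_def)
    qed
  next
    case False
    then have "i = l" using bounds by simp
    moreover have "y = k \<Longrightarrow> last_step w \<noteq> S"
      using below_top_if_last_step_S[OF less.prems(1)] less.prems(2) by auto
    ultimately show ?thesis
      unfolding unfold using ZN bounds by (auto simp: state_weight_def)
  qed
qed

lemma EX2_eq_entry_weight: "1 \<le> l \<Longrightarrow> EX2 k l = entry_weight k l 0"
  using completion_weight_eq_state_weight[of k l "[]" 0 0]
  by (simp add: EX2_eq_completion_weight state_weight_def last_step_def)

definition entry_gf :: "nat \<Rightarrow> nat \<Rightarrow> real fps" where
  "entry_gf k a = Abs_fps (\<lambda>n. entry_weight k n a)"

definition pow2_dist :: "nat \<Rightarrow> nat \<Rightarrow> real" where
  "pow2_dist a h = (if a \<le> h then 2 ^ (h - a) else 2 ^ (a - h))"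

definition wall_factor :: "nat \<Rightarrow> nat \<Rightarrow> real" where
  "wall_factor k h = (if h = 0 \<or> h = k then 1 else 2)"

definition kernel_sum :: "nat \<Rightarrow> nat \<Rightarrow> nat \<Rightarrow> real" where
  "kernel_sum k a n = (\<Sum>h\<le>k. pow2_dist a h * wall_factor k h * entry_weight k n h)"

text \<open>Since a \<mapsto> 2^|a - h| satisfies u(a+1) + u(a-1) = 5/2 u(a) except at a = h, the
  kernel_gf satisfy a three-term recurrence in a (kernel_gf_rec).\<close>
definition kernel_gf :: "nat \<Rightarrow> nat \<Rightarrow> real fps" where
  "kernel_gf k a = Abs_fps (kernel_sum k a)"

lemma double_transit_weight:
  assumes "a \<le> k" "h \<le> k"
  shows "2 * transit_weight k a h =
    pow2_dist a h * wall_factor k h + (if h = a \<and> (a = 0 \<or> a = k) then 1 else 0)"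
proof -
  consider "h = a" | "a < h" | "h < a" by linarith
  then show ?thesis
  proof cases
    case 1
    then show ?thesis by (simp add: transit_weight_def pow2_dist_def wall_factor_def)
  next
    case 2
    then show ?thesis using assms
      by (simp add: transit_weight_def pow2_dist_def wall_factor_def power_diff_eq_mult_power_diff_Suc)
  next
    case 3
    then show ?thesis using assms
      by (simp add: transit_weight_def pow2_dist_def wall_factor_def power_diff_eq_mult_power_diff_Suc)
  qed
qed

lemma double_transit_sum:
  assumes "a \<le> k"
  shows "2 * (\<Sum>h\<le>k. transit_weight k a h * entry_weight k n h) =
    kernel_sum k a n + (if a = 0 \<or> a = k then entry_weight k n a else 0)"
proof -
  have "2 * (\<Sum>h\<le>k. transit_weight k a h * entry_weight k n h) =
      (\<Sum>h\<le>k. pow2_dist a h * wall_factor k h * entry_weight k n h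
        + (if h = a then (if a = 0 \<or> a = k then entry_weight k n h else 0) else 0))"
    unfolding sum_distrib_left
    by (rule sum.cong[OF refl]) (use assms in \<open>simp add: double_transit_weight distrib_right flip: mult.assoc\<close>)
  also have "\<dots> = kernel_sum k a n + (if a = 0 \<or> a = k then entry_weight k n a else 0)"
    using assms by (simp add: sum.distrib kernel_sum_def)
  finally show ?thesis .
qed

lemma entry_gf_0_eq: "1 \<le> k \<Longrightarrow> entry_gf k 0 = 1 + fps_X * (kernel_gf k 0 + entry_gf k 0)"
proof (rule fps_ext)
  fix n assume k: "1 \<le> k"
  show "entry_gf k 0 $ n = (1 + fps_X * (kernel_gf k 0 + entry_gf k 0)) $ n"
  proof (cases n)
    case (Suc m)
    have "entry_weight k (Suc m) 0 = 2 * (\<Sum>h\<le>k. transit_weight k 0 h * entry_weight k m h)"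
      using k by (simp add: entry_degree_def)
    also have "\<dots> = kernel_sum k 0 m + entry_weight k m 0"
      using double_transit_sum[of 0 k m] by simp
    finally show ?thesis using Suc by (simp add: entry_gf_def kernel_gf_def)
  qed (simp add: entry_gf_def)
qed

lemma entry_gf_interior_eq:
  "0 < a \<Longrightarrow> a < k \<Longrightarrow> 2 * entry_gf k a = 2 + 3 * (fps_X * kernel_gf k a)"
proof (rule fps_ext)
  fix n assume a: "0 < a" "a < k"
  show "(2 * entry_gf k a) $ n = (2 + 3 * (fps_X * kernel_gf k a)) $ n"
  proof (cases n)
    case (Suc m)
    have "2 * entry_weight k (Suc m) a = 3 * (2 * (\<Sum>h\<le>k. transit_weight k a h * entry_weight k m h))"
      using a by (simp add: entry_degree_def)
    also have "\<dots> = 3 * kernel_sum k a m"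
      using double_transit_sum[of a k m] a by simp
    finally show ?thesis using Suc by (simp add: entry_gf_def kernel_gf_def numeral_fps_const)
  qed (simp add: entry_gf_def numeral_fps_const)
qed

lemma pow2_dist_1: "2 * pow2_dist 1 h = pow2_dist 0 h + (if h = 0 then 3 else 0)"
  by (cases h) (auto simp: pow2_dist_def)

lemma pow2_dist_rec:
  assumes "1 \<le> a"
  shows "2 * pow2_dist (a + 1) h + 2 * pow2_dist (a - 1) h = 5 * pow2_dist a h + (if h = a then 3 else 0)"
proof -
  consider "h = a" | "a < h" | "h + 1 = a" | "h + 1 < a" by linarith
  then show ?thesis
  proof cases
    case 1
    then show ?thesis using assms by (simp add: pow2_dist_def)
  next
    case 2
    define j where "j = h - a - 1"
    with 2 have h: "h = a + 1 + j" by simp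
    have "pow2_dist (a + 1) h = 2 ^ j" "pow2_dist (a - 1) h = 4 * 2 ^ j" "pow2_dist a h = 2 * 2 ^ j"
      using assms by (auto simp: pow2_dist_def h)
    then show ?thesis using h by simp
  next
    case 3
    then show ?thesis by (auto simp: pow2_dist_def)
  next
    case 4
    define j where "j = a - h - 2"
    with 4 have a: "a = h + 2 + j" by simp
    have "pow2_dist (a + 1) h = 8 * 2 ^ j" "pow2_dist (a - 1) h = 2 * 2 ^ j" "pow2_dist a h = 4 * 2 ^ j"
      by (simp_all add: pow2_dist_def a power_add)
    then show ?thesis using a by simp
  qed
qed

lemma kernel_gf_1_eq: "1 \<le> k \<Longrightarrow> 2 * kernel_gf k 1 = kernel_gf k 0 + 3 * entry_gf k 0"
proof (rule fps_ext)
  fix n assume k: "1 \<le> k"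
  have "2 * kernel_sum k 1 n = (\<Sum>h\<le>k. (2 * pow2_dist 1 h) * wall_factor k h * entry_weight k n h)"
    by (simp add: kernel_sum_def sum_distrib_left mult.assoc)
  also have "\<dots> = (\<Sum>h\<le>k. pow2_dist 0 h * wall_factor k h * entry_weight k n h
                     + (if h = 0 then 3 * entry_weight k n h else 0))"
    by (rule sum.cong[OF refl], subst pow2_dist_1) (auto simp: wall_factor_def distrib_right)
  also have "\<dots> = kernel_sum k 0 n + 3 * entry_weight k n 0"
    by (simp add: sum.distrib kernel_sum_def)
  finally show "(2 * kernel_gf k 1) $ n = (kernel_gf k 0 + 3 * entry_gf k 0) $ n"
    by (simp add: kernel_gf_def entry_gf_def numeral_fps_const)
qed

lemma kernel_gf_rec:
  assumes "1 \<le> a" "a < k"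
  shows "2 * kernel_gf k (a + 1) + 2 * kernel_gf k (a - 1) = 5 * kernel_gf k a + 6 * entry_gf k a"
proof (rule fps_ext)
  fix n
  have "2 * kernel_sum k (a + 1) n + 2 * kernel_sum k (a - 1) n =
      (\<Sum>h\<le>k. (2 * pow2_dist (a + 1) h + 2 * pow2_dist (a - 1) h) * wall_factor k h * entry_weight k n h)"
    by (simp add: kernel_sum_def sum_distrib_left sum.distrib[symmetric] distrib_right mult.assoc)
  also have "\<dots> = (\<Sum>h\<le>k. 5 * (pow2_dist a h * wall_factor k h * entry_weight k n h)
                     + (if h = a then 6 * entry_weight k n h else 0))"
    by (rule sum.cong[OF refl], subst pow2_dist_rec[OF assms(1)])
      (use assms in \<open>auto simp: wall_factor_def distrib_right\<close>)
  also have "\<dots> = 5 * kernel_sum k a n + 6 * entry_weight k n a"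
    using assms by (simp add: sum.distrib kernel_sum_def sum_distrib_left)
  finally show "(2 * kernel_gf k (a + 1) + 2 * kernel_gf k (a - 1)) $ n = (5 * kernel_gf k a + 6 * entry_gf k a) $ n"
    by (simp add: kernel_gf_def entry_gf_def numeral_fps_const)
qed

lemma sum_atMost_reflect: "(\<Sum>h\<le>(k::nat). g h) = (\<Sum>h\<le>k. g (k - h))"
  using sum.atLeastAtMost_rev[of g 0 k] by (simp add: atLeast0AtMost)

lemma entry_weight_reflect: "a \<le> k \<Longrightarrow> entry_weight k n (k - a) = entry_weight k n a"
proof (induction n arbitrary: a)
  case (Suc n)
  have "(\<Sum>h\<le>k. transit_weight k (k - a) h * entry_weight k n h) =
      (\<Sum>h\<le>k. transit_weight k (k - a) (k - h) * entry_weight k n (k - h))"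
    by (rule sum_atMost_reflect)
  also have "\<dots> = (\<Sum>h\<le>k. transit_weight k a h * entry_weight k n h)"
    by (rule sum.cong[OF refl]) (use Suc in \<open>auto simp: transit_weight_def\<close>)
  finally show ?case using Suc.prems by (auto simp: entry_degree_def)
qed simp

lemma kernel_gf_reflect: "a \<le> k \<Longrightarrow> kernel_gf k (k - a) = kernel_gf k a"
proof -
  assume a: "a \<le> k"
  have "kernel_sum k (k - a) n = kernel_sum k a n" for n
    unfolding kernel_sum_def
    by (subst sum_atMost_reflect, rule sum.cong[OF refl])
      (use a in \<open>auto simp: entry_weight_reflect pow2_dist_def wall_factor_def\<close>)
  then have "kernel_sum k (k - a) = kernel_sum k a" ..
  then show ?thesis by (simp add: kernel_gf_def)
qed

lemma linear_recurrence_unique: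
  fixes u v :: "nat \<Rightarrow> 'a :: {plus, times}"
  assumes "\<And>n. u (Suc (Suc n)) = a * u (Suc n) + b * u n"
    and "\<And>n. v (Suc (Suc n)) = a * v (Suc n) + b * v n"
    and "u 0 = v 0" "u 1 = v 1"
  shows "u n = v n"
proof -
  have "u n = v n \<and> u (Suc n) = v (Suc n)"
    by (induction n) (use assms in auto)
  then show ?thesis ..
qed

lemma shifted_difference_rec:
  fixes u f :: "nat \<Rightarrow> 'a :: comm_ring"
  assumes "\<And>n. u (Suc (Suc n)) = a * u (Suc n) + b * u n + f n"
  shows "u (Suc (Suc n) + j) - d * u (Suc (Suc n)) =
    a * (u (Suc n + j) - d * u (Suc n)) + b * (u (n + j) - d * u n) + (f (n + j) - d * f n)"
  using assms[of n] assms[of "n + j"] by (simp add: algebra_simps)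

abbreviation Gfps :: "nat \<Rightarrow> real fps" where
  "Gfps k \<equiv> fps_of_poly (Gpoly k)"

abbreviation Nfps :: "nat \<Rightarrow> real fps" where
  "Nfps k \<equiv> fps_of_poly (Npoly k)"

lemmas fps_of_poly_arith =
  fps_of_poly_mult fps_of_poly_diff fps_of_poly_smult fps_of_poly_pCons fps_of_poly_add
  fps_of_poly_const fps_numeral_fps_const

lemma Gfps_rec:
  assumes "1 \<le> j"
  shows "Gfps (2 * Suc (Suc n) + j) = (5 + 9 * fps_X) * Gfps (2 * Suc n + j) - 4 * Gfps (2 * n + j)"
proof -
  obtain m where m: "2 * n + j = Suc m" using assms by (intro that[of "2 * n + j - 1"]) simp
  then have "2 * Suc (Suc n) + j = Suc (Suc (Suc (Suc (Suc m))))" "2 * Suc n + j = Suc (Suc (Suc m))"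
    by simp_all
  with m show ?thesis
    by (simp only: Gpoly.simps(6) fps_of_poly_arith) (simp add: algebra_simps)
qed

lemma Nfps_rec:
  assumes "1 \<le> j"
  shows "Nfps (2 * Suc (Suc n) + j) = (5 + 9 * fps_X) * Nfps (2 * Suc n + j) - 4 * Nfps (2 * n + j)"
proof -
  obtain m where m: "2 * n + j = Suc m" using assms by (intro that[of "2 * n + j - 1"]) simp
  then have "2 * Suc (Suc n) + j = Suc (Suc (Suc (Suc (Suc m))))" "2 * Suc n + j = Suc (Suc (Suc m))"
    by simp_all
  with m show ?thesis
    by (simp only: Npoly.simps(6) fps_of_poly_arith) (simp add: algebra_simps)
qed

lemma Gpoly_coeff_0: "1 \<le> k \<Longrightarrow> coeff (Gpoly k) 0 = 1"
  by (induction k rule: Gpoly.induct) (simp_all add: coeff_mult_0)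

text \<open>Multiplying kernel_gf_rec by 2^a (1 - x) and eliminating entry_gf by
  entry_gf_interior_eq expresses 2^a (1 - x) kernel_gf k a linearly in kernel_gf k 0.\<close>
fun hcoeff :: "nat \<Rightarrow> real fps" where
  "hcoeff 0 = 1 - fps_X"
| "hcoeff (Suc 0) = 1 + 2 * fps_X"
| "hcoeff (Suc (Suc a)) = (5 + 9 * fps_X) * hcoeff (Suc a) - 4 * hcoeff a"

fun hconst :: "nat \<Rightarrow> real fps" where
  "hconst 0 = 0"
| "hconst (Suc 0) = 3"
| "hconst (Suc (Suc a)) = (5 + 9 * fps_X) * hconst (Suc a) - 4 * hconst a + 6 * 2 ^ Suc a * (1 - fps_X)"

lemma scaled_kernel_gf_eq:
  assumes k: "1 \<le> k"
  shows "a \<le> k \<Longrightarrow> 2 ^ a * (1 - fps_X) * kernel_gf k a = hcoeff a * kernel_gf k 0 + hconst a"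
proof (induction a rule: less_induct)
  case (less a)
  have "a = 0 \<or> a = 1 \<or> (\<exists>b. a = Suc (Suc b))" by presburger
  then consider "a = 0" | "a = 1" | b where "a = Suc (Suc b)" by blast
  then show ?case
  proof cases
    case 1
    then show ?thesis by simp
  next
    case 2
    have "2 * (1 - fps_X) * kernel_gf k 1 = (1 + 2 * fps_X) * kernel_gf k 0 + 3"
      using entry_gf_0_eq[OF k] kernel_gf_1_eq[OF k] by algebra
    then show ?thesis using 2 by simp
  next
    case 3
    with less.prems have b: "1 \<le> Suc b" "Suc b < k" by simp_all
    define t :: "real fps" where "t = 2 ^ b"
    have "t * (1 - fps_X) * kernel_gf k b = hcoeff b * kernel_gf k 0 + hconst b"
      "2 * t * (1 - fps_X) * kernel_gf k (Suc b) = hcoeff (Suc b) * kernel_gf k 0 + hconst (Suc b)"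
      using less.IH[of b] less.IH[of "Suc b"] less.prems 3 by (simp_all add: t_def)
    moreover have "2 * kernel_gf k (Suc (Suc b)) + 2 * kernel_gf k b = 5 * kernel_gf k (Suc b) + 6 * entry_gf k (Suc b)"
      "2 * entry_gf k (Suc b) = 2 + 3 * (fps_X * kernel_gf k (Suc b))"
      using kernel_gf_rec[OF b] entry_gf_interior_eq[of "Suc b" k] b by simp_all
    ultimately have "2 * (2 * t) * (1 - fps_X) * kernel_gf k (Suc (Suc b)) =
        ((5 + 9 * fps_X) * hcoeff (Suc b) - 4 * hcoeff b) * kernel_gf k 0
        + ((5 + 9 * fps_X) * hconst (Suc b) - 4 * hconst b + 6 * (2 * t) * (1 - fps_X))"
      by algebra
    then show ?thesis using 3 by (simp add: t_def)
  qed
qed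

lemma hcoeff_rec: "hcoeff (Suc (Suc n)) = (5 + 9 * fps_X) * hcoeff (Suc n) + - 4 * hcoeff n + 0"
  by simp

lemma hcoeff_minus_hconst_rec:
  "hcoeff (Suc (Suc n)) - hconst (Suc (Suc n)) =
     (5 + 9 * fps_X) * (hcoeff (Suc n) - hconst (Suc n)) + - 4 * (hcoeff n - hconst n)
       + - (6 * 2 ^ Suc n * (1 - fps_X))"
  by (simp add: algebra_simps)

lemma hcoeff_even: "hcoeff (n + 2) - 4 * hcoeff n = - 3 * Gfps (2 * n + 2)"
  by (rule linear_recurrence_unique[where u = "\<lambda>n. hcoeff (n + 2) - 4 * hcoeff n"
        and v = "\<lambda>n. - 3 * Gfps (2 * n + 2)" and a = "5 + 9 * fps_X" and b = "- 4"])
    (use shifted_difference_rec[where u = hcoeff and f = "\<lambda>_. 0", OF hcoeff_rec, of _ 2 4]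
      Gfps_rec[of 2] in \<open>simp_all add: fps_of_poly_arith numeral_eq_Suc algebra_simps\<close>)

text \<open>The inhomogeneous term 6 2^(n+1) (1 - x) of hconst cancels in the differences
  taken here, since they are of the form u (n + j) - 2^j u n.\<close>
lemma hconst_even:
  "(hcoeff (n + 2) - hconst (n + 2)) - 4 * (hcoeff n - hconst n) = - 6 * (1 - fps_X) * Nfps (2 * n + 2)"
  by (rule linear_recurrence_unique[where
        u = "\<lambda>n. (hcoeff (n + 2) - hconst (n + 2)) - 4 * (hcoeff n - hconst n)"
        and v = "\<lambda>n. - 6 * (1 - fps_X) * Nfps (2 * n + 2)" and a = "5 + 9 * fps_X" and b = "- 4"])
    (use shifted_difference_rec[where u = "\<lambda>n. hcoeff n - hconst n"
          and f = "\<lambda>n. - (6 * 2 ^ Suc n * (1 - fps_X))", OF hcoeff_minus_hconst_rec, of _ 2 4]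
      Nfps_rec[of 2] in \<open>simp_all add: fps_of_poly_arith numeral_eq_Suc algebra_simps\<close>)

lemma hcoeff_odd: "hcoeff (n + 1) - 2 * hcoeff n = - Gfps (2 * n + 1)"
  by (rule linear_recurrence_unique[where u = "\<lambda>n. hcoeff (n + 1) - 2 * hcoeff n"
        and v = "\<lambda>n. - Gfps (2 * n + 1)" and a = "5 + 9 * fps_X" and b = "- 4"])
    (use shifted_difference_rec[where u = hcoeff and f = "\<lambda>_. 0", OF hcoeff_rec, of _ 1 2]
      Gfps_rec[of 1] in \<open>simp_all add: fps_of_poly_arith numeral_eq_Suc algebra_simps\<close>)

lemma hconst_odd:
  "(hcoeff (n + 1) - hconst (n + 1)) - 2 * (hcoeff n - hconst n) = - 2 * (1 - fps_X) * Nfps (2 * n + 1)"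
  by (rule linear_recurrence_unique[where
        u = "\<lambda>n. (hcoeff (n + 1) - hconst (n + 1)) - 2 * (hcoeff n - hconst n)"
        and v = "\<lambda>n. - 2 * (1 - fps_X) * Nfps (2 * n + 1)" and a = "5 + 9 * fps_X" and b = "- 4"])
    (use shifted_difference_rec[where u = "\<lambda>n. hcoeff n - hconst n"
          and f = "\<lambda>n. - (6 * 2 ^ Suc n * (1 - fps_X))", OF hcoeff_minus_hconst_rec, of _ 1 2]
      Nfps_rec[of 1] in \<open>simp_all add: fps_of_poly_arith numeral_eq_Suc algebra_simps\<close>)

lemma one_minus_fps_X_nonzero: "(1 - fps_X :: 'a :: comm_ring_1 fps) \<noteq> 0"
proof
  assume "(1 - fps_X :: 'a fps) = 0"
  then have "(1 - fps_X :: 'a fps) $ 0 = 0" by simp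
  then show False by simp
qed

text \<open>The reflection symmetry a \<mapsto> k - a of the column gives one extra linear equation
  for kernel_gf k 0, at the middle of the column.\<close>
lemma entry_gf_0_solution:
  assumes k: "1 \<le> k"
  shows "(entry_gf k 0 - 1) * Gfps k = 2 * fps_X * Nfps k"
proof -
  let ?g = "kernel_gf k 0" and ?V = "entry_gf k 0"
  have V: "?V = 1 + fps_X * (?g + ?V)" by (rule entry_gf_0_eq[OF k])
  have H: "2 ^ a * (1 - fps_X) * kernel_gf k a = hcoeff a * ?g + hconst a" if "a \<le> k" for a
    by (rule scaled_kernel_gf_eq[OF k that])
  have "3 * ((1 - fps_X) * ((?V - 1) * Gfps k - 2 * fps_X * Nfps k)) = 0"
  proof (cases "even k")
    case True
    define n where "n = k div 2 - 1"
    have n: "k = 2 * n + 2" using True k by (auto simp: n_def)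
    have "kernel_gf k (n + 2) = kernel_gf k n"
      using kernel_gf_reflect[of n k] n by (simp add: numeral_2_eq_2)
    then have "hcoeff (n + 2) * ?g + hconst (n + 2) = 4 * (2 ^ n * (1 - fps_X) * kernel_gf k n)"
      by (subst H[symmetric]) (use n in \<open>simp_all add: power_add mult_ac\<close>)
    also have "\<dots> = 4 * (hcoeff n * ?g + hconst n)"
      using H[of n] n by simp
    finally have "hcoeff (n + 2) * ?g + hconst (n + 2) = 4 * (hcoeff n * ?g + hconst n)" .
    moreover have "hcoeff (n + 2) - 4 * hcoeff n = - 3 * Gfps k"
      "(hcoeff (n + 2) - hconst (n + 2)) - 4 * (hcoeff n - hconst n) = - 6 * (1 - fps_X) * Nfps k"
      using hcoeff_even[of n] hconst_even[of n] n by simp_all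
    ultimately show ?thesis using V by algebra
  next
    case False
    define n where "n = k div 2"
    have n: "k = 2 * n + 1" using False by (simp add: n_def)
    have "kernel_gf k (n + 1) = kernel_gf k n"
      using kernel_gf_reflect[of n k] n by simp
    then have "hcoeff (n + 1) * ?g + hconst (n + 1) = 2 * (2 ^ n * (1 - fps_X) * kernel_gf k n)"
      by (subst H[symmetric]) (use n in \<open>simp_all add: mult_ac\<close>)
    also have "\<dots> = 2 * (hcoeff n * ?g + hconst n)"
      using H[of n] n by simp
    finally have "hcoeff (n + 1) * ?g + hconst (n + 1) = 2 * (hcoeff n * ?g + hconst n)" .
    moreover have "hcoeff (n + 1) - 2 * hcoeff n = - Gfps k"
      "(hcoeff (n + 1) - hconst (n + 1)) - 2 * (hcoeff n - hconst n) = - 2 * (1 - fps_X) * Nfps k"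
      using hcoeff_odd[of n] hconst_odd[of n] n by simp_all
    ultimately show ?thesis using V by algebra
  qed
  then show ?thesis
    using one_minus_fps_X_nonzero by (simp add: fps_numeral_fps_const)
qed

theorem proposition2p2:
  fixes k :: nat
  assumes "k \<ge> 1"
  shows "Abs_fps (\<lambda>l. if l = 0 then 0 else EX2 k l)
         = fps_const 2 * fps_X * fps_of_poly (Npoly k) / fps_of_poly (Gpoly k)"
proof -
  have M: "Abs_fps (\<lambda>l. if l = 0 then 0 else EX2 k l) = entry_gf k 0 - 1"
    by (rule fps_ext) (simp add: entry_gf_def EX2_eq_entry_weight)
  have "Gfps k \<noteq> 0"
  proof
    assume "Gfps k = 0"
    then have "Gfps k $ 0 = 0" by simp
    then show False using Gpoly_coeff_0[OF assms] by simp
  qed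
  then have "(entry_gf k 0 - 1) * Gfps k / Gfps k = entry_gf k 0 - 1"
    by (rule fps_divide_times_eq)
  then show ?thesis
    using entry_gf_0_solution[OF assms] M by (simp add: fps_numeral_fps_const)
qed

end
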